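(* Let $\phi$ be a flow of a compact metric space $X$. Suppose that for every $\epsilon>0$ there is $\delta>0$ such that $B[x,\delta\,dist(x,Sing(\phi))]\subset\phi_{[-\epsilon,\epsilon]}(x)$ for every $x\in X$. Then $\phi$ is both singular-expansive and singular-equicontinuous.
   Context: A flow is a continuous $\phi:\mathbb{R}\times X\to X$ with $\phi_0=\mathrm{id}$, $\phi_{t+s}=\phi_t\circ\phi_s$; $\phi_I(x)=\{\phi_t(x):t\in I\}$; $Sing(\phi)$ is the set of fixed points; $dist(z,A)=\inf_{a\in A}d(z,a)$, with $dist(z,\emptyset)=diam(X)$; $B[x,r]=\{y:d(x,y)\le r\}$. $\phi$ is singular-expansive if for every $\epsilon>0$ there is $\delta>0$ such that whenever $x,y\in X$ and an increasing homeomorphism $s:\mathbb{R}\to\mathbb{R}$ satisfy $d(\phi_t(x),\phi_{s(t)}(y))\le\delta\,dist(\phi_t(x),Sing(\phi))$ for all $t$, then $\phi_{s(t_0)}(y)\in\phi_{[t_0-\epsilon,t_0+\epsilon]}(x)$ for some $t_0\in\mathbb{R}$. $\phi$ is singular-equicontinuous if for every $\epsilon>0$ there is $\delta>0$ such that $x,y\in X$ and $d(x,y)\le\delta\,dist(x,Sing(\phi))$ imply $d(\phi_t(x),\phi_t(y))\le\epsilon$ for all $t\in\mathbb{R}$. *)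

theory Defs
  imports "HOL-Analysis.Analysis"
begin

definition is_flow :: "'a::metric_space set \<Rightarrow> (real \<Rightarrow> 'a \<Rightarrow> 'a) \<Rightarrow> bool" where
  "is_flow X phi \<longleftrightarrow>
     continuous_on (UNIV \<times> X) (\<lambda>(t, x). phi t x) \<and>
     (\<forall>t. \<forall>x\<in>X. phi t x \<in> X) \<and>
     (\<forall>x\<in>X. phi 0 x = x) \<and>
     (\<forall>t s. \<forall>x\<in>X. phi (t + s) x = phi t (phi s x))"

definition Sing :: "'a set \<Rightarrow> (real \<Rightarrow> 'a \<Rightarrow> 'a) \<Rightarrow> 'a set" where
  "Sing X phi = {x \<in> X. \<forall>t. phi t x = x}"

text \<open>dist(z,A), with the convention dist(z,{}) = diam X.\<close>
definition sdist :: "'a::metric_space set \<Rightarrow> 'a set \<Rightarrow> 'a \<Rightarrow> real" where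
  "sdist X A z = (if A = {} then diameter X else infdist z A)"

definition orbit_seg :: "(real \<Rightarrow> 'a \<Rightarrow> 'a) \<Rightarrow> real set \<Rightarrow> 'a \<Rightarrow> 'a set" where
  "orbit_seg phi I x = (\<lambda>t. phi t x) ` I"

definition singular_expansive :: "'a::metric_space set \<Rightarrow> (real \<Rightarrow> 'a \<Rightarrow> 'a) \<Rightarrow> bool" where
  "singular_expansive X phi \<longleftrightarrow>
     (\<forall>\<epsilon>>0. \<exists>\<delta>>0. \<forall>x\<in>X. \<forall>y\<in>X. \<forall>s :: real \<Rightarrow> real.
        (strict_mono s \<and> (\<exists>g. homeomorphism UNIV UNIV s g) \<and>
         (\<forall>t. dist (phi t x) (phi (s t) y) \<le> \<delta> * sdist X (Sing X phi) (phi t x)))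
        \<longrightarrow> (\<exists>t0. phi (s t0) y \<in> orbit_seg phi {t0 - \<epsilon> .. t0 + \<epsilon>} x))"

definition singular_equicontinuous :: "'a::metric_space set \<Rightarrow> (real \<Rightarrow> 'a \<Rightarrow> 'a) \<Rightarrow> bool" where
  "singular_equicontinuous X phi \<longleftrightarrow>
     (\<forall>\<epsilon>>0. \<exists>\<delta>>0. \<forall>x\<in>X. \<forall>y\<in>X.
        dist x y \<le> \<delta> * sdist X (Sing X phi) x \<longrightarrow> (\<forall>t. dist (phi t x) (phi t y) \<le> \<epsilon>))"

end

theory Submission
  imports Defs
begin

text \<open>Under the hypothesis, a point that is close to x relative to the distance of x to the
singular set lies on a short orbit segment through x. For expansiveness it suffices to apply
this at time 0. For equicontinuity, y = phi r x with r small, so phi t y = phi r (phi t x) stays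
close to phi t x for all t, because on the compact phase space short-time flowing moves every
point uniformly little.\<close>

lemma flow_uniformly_small_time:
  fixes X :: "'a::metric_space set" and phi :: "real \<Rightarrow> 'a \<Rightarrow> 'a"
  assumes "compact X" "is_flow X phi" "e > 0"
  obtains \<eta> where "\<eta> > 0" "\<And>r z. \<bar>r\<bar> \<le> \<eta> \<Longrightarrow> z \<in> X \<Longrightarrow> dist (phi r z) z < e"
proof -
  let ?S = "{-1..1::real} \<times> X"
  have "continuous_on ?S (\<lambda>(t, x). phi t x)"
    using assms(2) unfolding is_flow_def by (auto intro: continuous_on_subset)
  moreover have "compact ?S"
    using assms(1) by (simp add: compact_Times)
  ultimately have "uniformly_continuous_on ?S (\<lambda>(t, x). phi t x)"
    by (rule compact_uniformly_continuous)
  then obtain d where "d > 0" and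
    d: "\<And>p q. p \<in> ?S \<Longrightarrow> q \<in> ?S \<Longrightarrow> dist q p < d \<Longrightarrow>
          dist ((\<lambda>(t, x). phi t x) q) ((\<lambda>(t, x). phi t x) p) < e"
    using assms(3) unfolding uniformly_continuous_on_def by blast
  show thesis
  proof
    show "min (d/2) 1 > 0" using \<open>d > 0\<close> by simp
    fix r z assume r: "\<bar>r\<bar> \<le> min (d/2) 1" and z: "z \<in> X"
    have "dist (r, z) (0, z) < d"
      using r \<open>d > 0\<close> by (simp add: dist_Pair_Pair dist_real_def)
    moreover have "(r, z) \<in> ?S" "(0, z) \<in> ?S"
      using r z by (auto simp: abs_le_iff)
    ultimately have "dist (phi r z) (phi 0 z) < e"
      using d by fastforce
    then show "dist (phi r z) z < e"
      using assms(2) z unfolding is_flow_def by simp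
  qed
qed

lemma flow_commute:
  assumes "is_flow X phi" "x \<in> X"
  shows "phi t (phi r x) = phi r (phi t x)"
  using assms unfolding is_flow_def by (metis add.commute)

lemma orbit_seg_symmetric_obtain:
  assumes "y \<in> orbit_seg phi {-\<eta>..\<eta>} x"
  obtains r where "\<bar>r\<bar> \<le> \<eta>" "y = phi r x"
  using assms that unfolding orbit_seg_def by (force simp: abs_le_iff)

lemma singular_expansive_if_balls_in_orbit_segs:
  fixes X :: "'a::metric_space set" and phi :: "real \<Rightarrow> 'a \<Rightarrow> 'a"
  assumes flow: "is_flow X phi"
    and balls: "\<forall>\<epsilon>>0. \<exists>\<delta>>0. \<forall>x\<in>X.
           cball x (\<delta> * sdist X (Sing X phi) x) \<inter> X \<subseteq> orbit_seg phi {-\<epsilon> .. \<epsilon>} x"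
  shows "singular_expansive X phi"
  unfolding singular_expansive_def
proof (intro allI impI)
  fix \<epsilon> :: real assume "\<epsilon> > 0"
  then obtain \<delta> where "\<delta> > 0" and
    \<delta>: "\<And>x. x \<in> X \<Longrightarrow> cball x (\<delta> * sdist X (Sing X phi) x) \<inter> X \<subseteq> orbit_seg phi {-\<epsilon> .. \<epsilon>} x"
    using balls by blast
  have "\<exists>t0. phi (s t0) y \<in> orbit_seg phi {t0 - \<epsilon> .. t0 + \<epsilon>} x"
    if "x \<in> X" "y \<in> X"
      and close: "\<forall>t. dist (phi t x) (phi (s t) y) \<le> \<delta> * sdist X (Sing X phi) (phi t x)"
    for x y s
  proof -
    have "phi 0 x = x" "phi (s 0) y \<in> X"
      using flow that(1,2) unfolding is_flow_def by auto
    then have "phi (s 0) y \<in> cball x (\<delta> * sdist X (Sing X phi) x) \<inter> X"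
      using close[rule_format, of 0] by simp
    then have "phi (s 0) y \<in> orbit_seg phi {0 - \<epsilon> .. 0 + \<epsilon>} x"
      using \<delta>[OF \<open>x \<in> X\<close>] by auto
    then show ?thesis by blast
  qed
  then show "\<exists>\<delta>>0. \<forall>x\<in>X. \<forall>y\<in>X. \<forall>s :: real \<Rightarrow> real.
      (strict_mono s \<and> (\<exists>g. homeomorphism UNIV UNIV s g) \<and>
       (\<forall>t. dist (phi t x) (phi (s t) y) \<le> \<delta> * sdist X (Sing X phi) (phi t x)))
      \<longrightarrow> (\<exists>t0. phi (s t0) y \<in> orbit_seg phi {t0 - \<epsilon> .. t0 + \<epsilon>} x)"
    using \<open>\<delta> > 0\<close> by blast
qed

lemma singular_equicontinuous_if_balls_in_orbit_segs:
  fixes X :: "'a::metric_space set" and phi :: "real \<Rightarrow> 'a \<Rightarrow> 'a"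
  assumes "compact X" and flow: "is_flow X phi"
    and balls: "\<forall>\<epsilon>>0. \<exists>\<delta>>0. \<forall>x\<in>X.
           cball x (\<delta> * sdist X (Sing X phi) x) \<inter> X \<subseteq> orbit_seg phi {-\<epsilon> .. \<epsilon>} x"
  shows "singular_equicontinuous X phi"
  unfolding singular_equicontinuous_def
proof (intro allI impI)
  fix \<epsilon> :: real assume "\<epsilon> > 0"
  obtain \<eta> where "\<eta> > 0" and
    \<eta>: "\<And>r z. \<bar>r\<bar> \<le> \<eta> \<Longrightarrow> z \<in> X \<Longrightarrow> dist (phi r z) z < \<epsilon>"
    using flow_uniformly_small_time[OF \<open>compact X\<close> flow \<open>\<epsilon> > 0\<close>] by blast
  obtain \<delta> where "\<delta> > 0" and
    \<delta>: "\<And>x. x \<in> X \<Longrightarrow> cball x (\<delta> * sdist X (Sing X phi) x) \<inter> X \<subseteq> orbit_seg phi {-\<eta> .. \<eta>} x"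
    using balls \<open>\<eta> > 0\<close> by blast
  have "dist (phi t x) (phi t y) \<le> \<epsilon>"
    if "x \<in> X" "y \<in> X" "dist x y \<le> \<delta> * sdist X (Sing X phi) x" for x y t
  proof -
    have "y \<in> orbit_seg phi {-\<eta> .. \<eta>} x"
      using \<delta>[OF \<open>x \<in> X\<close>] that by auto
    then obtain r where "\<bar>r\<bar> \<le> \<eta>" "y = phi r x"
      by (rule orbit_seg_symmetric_obtain)
    then have "phi t y = phi r (phi t x)"
      using flow_commute[OF flow \<open>x \<in> X\<close>] by simp
    moreover have "phi t x \<in> X"
      using flow \<open>x \<in> X\<close> unfolding is_flow_def by blast
    ultimately show ?thesis
      using \<eta>[OF \<open>\<bar>r\<bar> \<le> \<eta>\<close>] by (simp add: dist_commute less_imp_le)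
  qed
  then show "\<exists>\<delta>>0. \<forall>x\<in>X. \<forall>y\<in>X.
      dist x y \<le> \<delta> * sdist X (Sing X phi) x \<longrightarrow> (\<forall>t. dist (phi t x) (phi t y) \<le> \<epsilon>)"
    using \<open>\<delta> > 0\<close> by blast
qed

theorem mainTheorem17:
  fixes X :: "'a::metric_space set" and phi :: "real \<Rightarrow> 'a \<Rightarrow> 'a"
  assumes "compact X"
    and "is_flow X phi"
    and "\<forall>\<epsilon>>0. \<exists>\<delta>>0. \<forall>x\<in>X.
           cball x (\<delta> * sdist X (Sing X phi) x) \<inter> X \<subseteq> orbit_seg phi {-\<epsilon> .. \<epsilon>} x"
  shows "singular_expansive X phi \<and> singular_equicontinuous X phi"
  using singular_expansive_if_balls_in_orbit_segs[OF assms(2,3)]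
    singular_equicontinuous_if_balls_in_orbit_segs[OF assms]
  by blast

end
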